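(* Let $G$ be a connected graph. Then $G$ is a core if and only if there exists a (possibly infinite) graph $H$ such that $G\to H$ and every homomorphism from $G$ to $H$ is locally injective.
   Context: A homomorphism $G\to H$ is an adjacency-preserving map $V(G)\to V(H)$; $G\to H$ means one exists. A homomorphism $\varphi$ is locally injective if $\varphi(u)\ne\varphi(v)$ for any two distinct vertices $u,v$ having a common neighbor. $G$ is a core if every homomorphism $G\to G$ is an automorphism. *)

theory Defs
  imports Main
begin

definition is_graph :: "'a set \<Rightarrow> ('a \<Rightarrow> 'a \<Rightarrow> bool) \<Rightarrow> bool" where
  "is_graph V E \<longleftrightarrow> (\<forall>u v. E u v \<longrightarrow> u \<in> V \<and> v \<in> V) \<and> (\<forall>u v. E u v \<longrightarrow> E v u) \<and> (\<forall>v. \<not> E v v)"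

definition connected_graph :: "'a set \<Rightarrow> ('a \<Rightarrow> 'a \<Rightarrow> bool) \<Rightarrow> bool" where
  "connected_graph V E \<longleftrightarrow> V \<noteq> {} \<and> (\<forall>u\<in>V. \<forall>v\<in>V. E\<^sup>*\<^sup>* u v)"

definition is_hom :: "'a set \<Rightarrow> ('a \<Rightarrow> 'a \<Rightarrow> bool) \<Rightarrow> 'b set \<Rightarrow> ('b \<Rightarrow> 'b \<Rightarrow> bool) \<Rightarrow> ('a \<Rightarrow> 'b) \<Rightarrow> bool" where
  "is_hom VG EG VH EH f \<longleftrightarrow> (\<forall>v\<in>VG. f v \<in> VH) \<and> (\<forall>u v. EG u v \<longrightarrow> EH (f u) (f v))"

definition hom_exists :: "'a set \<Rightarrow> ('a \<Rightarrow> 'a \<Rightarrow> bool) \<Rightarrow> 'b set \<Rightarrow> ('b \<Rightarrow> 'b \<Rightarrow> bool) \<Rightarrow> bool" where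
  "hom_exists VG EG VH EH \<longleftrightarrow> (\<exists>f. is_hom VG EG VH EH f)"

definition locally_injective :: "'a set \<Rightarrow> ('a \<Rightarrow> 'a \<Rightarrow> bool) \<Rightarrow> ('a \<Rightarrow> 'b) \<Rightarrow> bool" where
  "locally_injective V E f \<longleftrightarrow>
     (\<forall>u\<in>V. \<forall>v\<in>V. \<forall>w\<in>V. u \<noteq> v \<and> E u w \<and> E v w \<longrightarrow> f u \<noteq> f v)"

definition is_automorphism :: "'a set \<Rightarrow> ('a \<Rightarrow> 'a \<Rightarrow> bool) \<Rightarrow> ('a \<Rightarrow> 'a) \<Rightarrow> bool" where
  "is_automorphism V E f \<longleftrightarrow> bij_betw f V V \<and> (\<forall>u\<in>V. \<forall>v\<in>V. E (f u) (f v) \<longleftrightarrow> E u v)"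

definition is_core :: "'a set \<Rightarrow> ('a \<Rightarrow> 'a \<Rightarrow> bool) \<Rightarrow> bool" where
  "is_core V E \<longleftrightarrow> (\<forall>f. is_hom V E V E f \<longrightarrow> is_automorphism V E f)"

end

theory Submission
  imports Defs "HOL-Library.FuncSet"
begin

text \<open>If \<open>H\<close> admits homomorphisms from \<open>G\<close> but only locally injective ones, then for every
  endomorphism \<open>f\<close> of \<open>G\<close> the composite \<open>G \<rightarrow> G \<rightarrow> H\<close> is locally injective, hence so is \<open>f\<close>.
  Conversely a core may take \<open>H = G\<close>. It remains to see that a locally injective endomorphism
  \<open>f\<close> of a finite connected graph is an automorphism. Some power \<open>g = f\<^sup>m\<close> is idempotent; it is
  still locally injective, so around a fixed point \<open>v\<close> it maps the finite neighbourhood of \<open>v\<close>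
  injectively into itself, hence onto itself. Thus the fixed points of \<open>g\<close>, which contain the
  image of \<open>g\<close>, are closed under adjacency and by connectivity form all of \<open>V\<close>. So \<open>f\<^sup>m\<close> is the
  identity on \<open>V\<close>, and \<open>f\<close> is an automorphism whose inverse is a power of \<open>f\<close>.\<close>

lemma is_hom_comp:
  assumes "is_hom VG EG VH EH f" and "is_hom VH EH VK EK g"
  shows "is_hom VG EG VK EK (g \<circ> f)"
  using assms by (auto simp: is_hom_def)

lemma is_hom_funpow:
  assumes "is_hom V E V E f"
  shows "is_hom V E V E (f ^^ k)"
proof (induction k)
  case (Suc k)
  show ?case
    using is_hom_comp[OF Suc assms] by (simp only: funpow.simps)
qed (simp add: is_hom_def)

lemma locally_injective_if_inj_on:
  "inj_on f V \<Longrightarrow> locally_injective V E f"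
  unfolding locally_injective_def by (meson inj_onD)

lemma locally_injective_comp_left:
  "locally_injective V E (g \<circ> f) \<Longrightarrow> locally_injective V E f"
  unfolding locally_injective_def by (metis comp_apply)

lemma locally_injective_comp:
  assumes "is_hom V E V E f" and "locally_injective V E f" and "locally_injective V E g"
  shows "locally_injective V E (g \<circ> f)"
  using assms unfolding locally_injective_def is_hom_def by (metis comp_apply)

lemma locally_injective_funpow:
  assumes "is_hom V E V E f" and "locally_injective V E f"
  shows "locally_injective V E (f ^^ k)"
proof (induction k)
  case 0
  then show ?case by (simp add: locally_injective_def)
next
  case (Suc k)
  then show ?case
    using locally_injective_comp[OF is_hom_funpow[OF assms(1)] Suc assms(2)] by (simp only: funpow.simps)
qed

lemma funpow_eq_on_finite:
  assumes "finite V" and "f ` V \<subseteq> V"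
  obtains i j where "i < j" and "\<And>x. x \<in> V \<Longrightarrow> (f ^^ j) x = (f ^^ i) x"
proof -
  define F where "F k = restrict (f ^^ k) V" for k :: nat
  have "(f ^^ k) x \<in> V" if "x \<in> V" for k x
    using assms(2) that by (induction k) auto
  then have "range F \<subseteq> V \<rightarrow>\<^sub>E V"
    by (auto simp: F_def)
  moreover have "finite (V \<rightarrow>\<^sub>E V)"
    using assms(1) by (simp add: finite_PiE)
  ultimately have "\<not> inj F"
    using finite_imageD finite_subset by blast
  then obtain a b where "a < b" and "F a = F b"
    unfolding inj_def by (metis linorder_neqE_nat)
  moreover have "(f ^^ b) x = (f ^^ a) x" if "F a = F b" and "x \<in> V" for a b x
    using fun_cong[OF \<open>F a = F b\<close>, of x] \<open>x \<in> V\<close> by (simp add: F_def)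
  ultimately show thesis
    using that by blast
qed

lemma funpow_idempotent_on_finite:
  assumes "finite V" and "f ` V \<subseteq> V"
  obtains m where "m > 0" and "\<And>x. x \<in> V \<Longrightarrow> (f ^^ m) ((f ^^ m) x) = (f ^^ m) x"
proof -
  obtain i j where "i < j" and eq: "\<And>x. x \<in> V \<Longrightarrow> (f ^^ j) x = (f ^^ i) x"
    using funpow_eq_on_finite[OF assms] by blast
  define d where "d = j - i"
  have periodic: "(f ^^ (i + d * k)) x = (f ^^ i) x" if "x \<in> V" for x k
  proof (induction k)
    case (Suc k)
    have "i + d * Suc k = d * k + j"
      using \<open>i < j\<close> by (simp add: d_def)
    then have "(f ^^ (i + d * Suc k)) x = (f ^^ (d * k)) ((f ^^ j) x)"
      by (simp only: funpow_add comp_apply)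
    also have "\<dots> = (f ^^ (i + d * k)) x"
      using eq[OF that] by (metis add.commute comp_apply funpow_add)
    finally show ?case using Suc by simp
  qed simp
  \<comment> \<open>Past \<open>i\<close> the powers are \<open>d\<close>-periodic, so any multiple of \<open>d\<close> exceeding \<open>i\<close> will do.\<close>
  define m where "m = d * (i + 1)"
  have "d > 0"
    using \<open>i < j\<close> by (simp add: d_def)
  then have "i < m" and "m > 0"
    unfolding m_def by (cases d; simp)+
  have "(f ^^ m) ((f ^^ m) x) = (f ^^ m) x" if "x \<in> V" for x
  proof -
    have "m + m = (m - i) + (i + d * (i + 1))"
      using \<open>i < m\<close> by (simp add: m_def)
    then have "(f ^^ m) ((f ^^ m) x) = (f ^^ (m - i)) ((f ^^ (i + d * (i + 1))) x)"
      by (metis comp_apply funpow_add)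
    also have "\<dots> = (f ^^ (m - i)) ((f ^^ i) x)"
      using periodic[OF that, of "i + 1"] by (simp only:)
    also have "\<dots> = (f ^^ m) x"
      using \<open>i < m\<close> by (metis comp_apply funpow_add le_add_diff_inverse2 less_imp_le)
    finally show ?thesis .
  qed
  then show thesis
    using that \<open>m > 0\<close> by blast
qed

lemma connected_graph_closed_subset:
  assumes "connected_graph V E" and "S \<subseteq> V" and "S \<noteq> {}"
    and closed: "\<And>v w. v \<in> S \<Longrightarrow> E v w \<Longrightarrow> w \<in> S"
  shows "S = V"
proof -
  obtain s where "s \<in> S"
    using assms(3) by blast
  have "x \<in> S" if "x \<in> V" for x
  proof -
    have "E\<^sup>*\<^sup>* s x"
      using assms(1,2) \<open>s \<in> S\<close> that unfolding connected_graph_def by blast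
    then show ?thesis
      by (induction rule: rtranclp_induct) (use \<open>s \<in> S\<close> closed in blast)+
  qed
  then show ?thesis
    using assms(2) by blast
qed

lemma locally_injective_fixed_vertex_permutes_neighbours:
  assumes "is_graph V E" and "finite {w. E v w}"
    and "is_hom V E V E g" and "locally_injective V E g" and "g v = v"
  shows "g ` {w. E v w} = {w. E v w}"
proof (rule endo_inj_surj[OF assms(2)])
  show "g ` {w. E v w} \<subseteq> {w. E v w}"
  proof (rule image_subsetI)
    fix w assume "w \<in> {w. E v w}"
    then have "E (g v) (g w)"
      using assms(3) by (simp add: is_hom_def)
    then show "g w \<in> {w. E v w}"
      using assms(5) by simp
  qed
  show "inj_on g {w. E v w}"
  proof (rule inj_onI)
    fix x y assume "x \<in> {w. E v w}" "y \<in> {w. E v w}" "g x = g y"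
    then have "E x v" "E y v" "x \<in> V" "y \<in> V" "v \<in> V"
      using assms(1) unfolding is_graph_def by auto
    then show "x = y"
      using assms(4) \<open>g x = g y\<close> unfolding locally_injective_def by blast
  qed
qed

lemma locally_injective_idempotent_endo_id:
  assumes "is_graph V E" and "connected_graph V E" and "\<And>v. finite {w. E v w}"
    and "is_hom V E V E g" and "locally_injective V E g"
    and idem: "\<And>x. x \<in> V \<Longrightarrow> g (g x) = g x"
  shows "\<And>x. x \<in> V \<Longrightarrow> g x = x"
proof -
  let ?Fix = "{x \<in> V. g x = x}"
  have "?Fix = V"
  proof (rule connected_graph_closed_subset[OF assms(2)])
    obtain v where "v \<in> V"
      using assms(2) unfolding connected_graph_def by blast
    then have "g v \<in> ?Fix"
      using assms(4) idem by (auto simp: is_hom_def)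
    then show "?Fix \<noteq> {}" by blast
    fix v w assume "v \<in> ?Fix" and "E v w"
    then have "w \<in> g ` {u. E v u}"
      using locally_injective_fixed_vertex_permutes_neighbours[OF assms(1,3,4,5)] by simp
    then obtain u where "E v u" and "w = g u"
      by blast
    moreover have "u \<in> V"
      using \<open>E v u\<close> assms(1) by (auto simp: is_graph_def)
    ultimately show "w \<in> ?Fix"
      using idem assms(4) by (auto simp: is_hom_def)
  qed auto
  then show "\<And>x. x \<in> V \<Longrightarrow> g x = x" by blast
qed

lemma automorphism_if_funpow_id:
  assumes "is_hom V E V E f" and "m > 0" and id: "\<And>x. x \<in> V \<Longrightarrow> (f ^^ m) x = x"
  shows "is_automorphism V E f"
proof -
  obtain k where m: "m = Suc k"
    using \<open>m > 0\<close> gr0_implies_Suc by blast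
  have left_inv: "(f ^^ k) (f x) = x" if "x \<in> V" for x
    using id[OF that] by (simp add: m funpow_Suc_right del: funpow.simps)
  have right_inv: "f ((f ^^ k) x) = x" if "x \<in> V" for x
    using id[OF that] by (simp add: m)
  have "bij_betw f V V"
  proof (rule bij_betw_imageI)
    show "inj_on f V"
      by (metis left_inv inj_onI)
    show "f ` V = V"
    proof
      show "f ` V \<subseteq> V"
        using assms(1) by (auto simp: is_hom_def)
      show "V \<subseteq> f ` V"
      proof
        fix x assume "x \<in> V"
        then have "(f ^^ k) x \<in> V"
          using is_hom_funpow[OF assms(1), of k] by (simp add: is_hom_def)
        then show "x \<in> f ` V"
          using right_inv[OF \<open>x \<in> V\<close>] by (metis image_eqI)
      qed
    qed
  qed
  moreover have "E (f u) (f v) \<longleftrightarrow> E u v" if "u \<in> V" "v \<in> V" for u v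
  proof
    assume "E (f u) (f v)"
    then have "E ((f ^^ k) (f u)) ((f ^^ k) (f v))"
      using is_hom_funpow[OF assms(1), of k] by (simp add: is_hom_def)
    then show "E u v"
      using left_inv that by simp
  qed (use assms(1) in \<open>simp add: is_hom_def\<close>)
  ultimately show ?thesis
    by (simp add: is_automorphism_def)
qed

lemma locally_injective_endo_automorphism:
  assumes "is_graph V E" and "finite V" and "connected_graph V E"
    and "is_hom V E V E f" and "locally_injective V E f"
  shows "is_automorphism V E f"
proof -
  have "f ` V \<subseteq> V"
    using assms(4) by (auto simp: is_hom_def)
  then obtain m where "m > 0" and idem: "\<And>x. x \<in> V \<Longrightarrow> (f ^^ m) ((f ^^ m) x) = (f ^^ m) x"
    using funpow_idempotent_on_finite[OF assms(2)] by blast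
  have "finite {w. E v w}" for v
    using assms(1,2) by (auto simp: is_graph_def intro: finite_subset)
  then have "\<And>x. x \<in> V \<Longrightarrow> (f ^^ m) x = x"
    using locally_injective_idempotent_endo_id[OF assms(1,3) _ is_hom_funpow[OF assms(4)]
        locally_injective_funpow[OF assms(4,5)] idem] by blast
  then show ?thesis
    using automorphism_if_funpow_id[OF assms(4) \<open>m > 0\<close>] by blast
qed

theorem lemma4p2:
  fixes V :: "'a set" and E :: "'a \<Rightarrow> 'a \<Rightarrow> bool"
  assumes "is_graph V E" and "finite V" and "connected_graph V E"
  shows "(is_core V E \<longrightarrow>
            (\<exists>(VH :: 'a set) EH. is_graph VH EH \<and> hom_exists V E VH EH \<and>
               (\<forall>f. is_hom V E VH EH f \<longrightarrow> locally_injective V E f)))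
       \<and> (\<forall>(VH :: 'b set) EH. is_graph VH EH \<and> hom_exists V E VH EH \<and>
               (\<forall>f. is_hom V E VH EH f \<longrightarrow> locally_injective V E f) \<longrightarrow> is_core V E)"
proof (intro conjI impI allI)
  assume "is_core V E"
  then have "locally_injective V E f" if "is_hom V E V E f" for f
    using that locally_injective_if_inj_on
    unfolding is_core_def is_automorphism_def bij_betw_def by blast
  moreover have "hom_exists V E V E"
    unfolding hom_exists_def is_hom_def by (metis id_apply)
  ultimately show "\<exists>(VH :: 'a set) EH. is_graph VH EH \<and> hom_exists V E VH EH \<and>
      (\<forall>f. is_hom V E VH EH f \<longrightarrow> locally_injective V E f)"
    using assms(1) by blast
next
  fix VH :: "'b set" and EH
  assume H: "is_graph VH EH \<and> hom_exists V E VH EH \<and>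
      (\<forall>f. is_hom V E VH EH f \<longrightarrow> locally_injective V E f)"
  then obtain h where h: "is_hom V E VH EH h"
    unfolding hom_exists_def by blast
  show "is_core V E"
    unfolding is_core_def
  proof (intro allI impI)
    fix f assume f: "is_hom V E V E f"
    then have "locally_injective V E f"
      using H is_hom_comp[OF f h] locally_injective_comp_left by blast
    then show "is_automorphism V E f"
      using locally_injective_endo_automorphism[OF assms f] by blast
  qed
qed

end
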